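(* Let $\alpha\in[0,1)$, let $n\geq f(\alpha)$, and let $s$ be an integer with $2\leq s\leq\frac{n-1}{3}$. Then $\rho_{\alpha}\big(K_s\vee(K_{n-3s+1}\cup (2s-1)K_1)\big)<\eta(n)$.
   Context: For a graph $G$, $A_{\alpha}(G)=\alpha D(G)+(1-\alpha)A(G)$ where $D(G)$ is the diagonal degree matrix and $A(G)$ the adjacency matrix, and $\rho_{\alpha}(G)$ is the largest eigenvalue of $A_{\alpha}(G)$. $\vee$ denotes join, $\cup$ disjoint union, $K_m$ the complete graph on $m$ vertices, $tK_1$ the edgeless graph on $t$ vertices. Define $f(\alpha)=14$ if $\alpha\in[0,\frac12]$, $f(\alpha)=17$ if $\alpha\in(\frac12,\frac23]$, $f(\alpha)=20$ if $\alpha\in(\frac23,\frac34]$, and $f(\alpha)=\frac{5}{1-\alpha}+1$ if $\alpha\in(\frac34,1)$. $\eta(n)$ is the largest root of $x^{3}-((\alpha+1)n+\alpha-4)x^{2}+(\alpha n^{2}+(\alpha^{2}-2\alpha-1)n-2\alpha+1)x-\alpha^{2}n^{2}+(5\alpha^{2}-3\alpha+2)n-10\alpha^{2}+15\alpha-8=0$. *)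

theory Defs
  imports Complex_Main
begin

text \<open>A finite simple graph on the vertex set {0..<n}: a pair (n, E) where
  E is the adjacency relation (symmetric, irreflexive by construction below).\<close>
type_synonym graph = "nat \<times> (nat \<Rightarrow> nat \<Rightarrow> bool)"

definition gorder :: "graph \<Rightarrow> nat" where "gorder G = fst G"
definition gadj :: "graph \<Rightarrow> nat \<Rightarrow> nat \<Rightarrow> bool" where "gadj G = snd G"

definition complete :: "nat \<Rightarrow> graph" where
  "complete m = (m, \<lambda>i j. i < m \<and> j < m \<and> i \<noteq> j)"

definition edgeless :: "nat \<Rightarrow> graph" where
  "edgeless t = (t, \<lambda>i j. False)"

definition gunion :: "graph \<Rightarrow> graph \<Rightarrow> graph" where
  "gunion G H = (gorder G + gorder H,
     \<lambda>i j. (i < gorder G \<and> j < gorder G \<and> gadj G i j) \<or>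
           (gorder G \<le> i \<and> gorder G \<le> j \<and> i < gorder G + gorder H \<and> j < gorder G + gorder H
             \<and> gadj H (i - gorder G) (j - gorder G)))"

definition gjoin :: "graph \<Rightarrow> graph \<Rightarrow> graph" where
  "gjoin G H = (gorder G + gorder H,
     \<lambda>i j. gadj (gunion G H) i j \<or>
           (i < gorder G \<and> gorder G \<le> j \<and> j < gorder G + gorder H) \<or>
           (j < gorder G \<and> gorder G \<le> i \<and> i < gorder G + gorder H))"

definition degree :: "graph \<Rightarrow> nat \<Rightarrow> nat" where
  "degree G i = card {j. j < gorder G \<and> gadj G i j}"

definition A_alpha :: "real \<Rightarrow> graph \<Rightarrow> nat \<Rightarrow> nat \<Rightarrow> real" where
  "A_alpha \<alpha> G i j = (if i = j then \<alpha> * real (degree G i) else 0)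
                      + (1 - \<alpha>) * (if gadj G i j then 1 else 0)"

definition is_eigenvalue :: "nat \<Rightarrow> (nat \<Rightarrow> nat \<Rightarrow> real) \<Rightarrow> real \<Rightarrow> bool" where
  "is_eigenvalue n M \<mu> \<longleftrightarrow> (\<exists>v::nat \<Rightarrow> real. (\<exists>i<n. v i \<noteq> 0) \<and>
      (\<forall>i<n. (\<Sum>j<n. M i j * v j) = \<mu> * v i))"

text \<open>Largest eigenvalue of A_alpha(G) (A_alpha(G) is real symmetric, so all eigenvalues are real).\<close>
definition rho_alpha :: "real \<Rightarrow> graph \<Rightarrow> real" where
  "rho_alpha \<alpha> G = Max {\<mu>. is_eigenvalue (gorder G) (A_alpha \<alpha> G) \<mu>}"

definition f_bound :: "real \<Rightarrow> real" where
  "f_bound \<alpha> = (if \<alpha> \<le> 1/2 then 14 else if \<alpha> \<le> 2/3 then 17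
                 else if \<alpha> \<le> 3/4 then 20 else 5 / (1 - \<alpha>) + 1)"

definition eta_poly :: "real \<Rightarrow> real \<Rightarrow> real \<Rightarrow> real" where
  "eta_poly \<alpha> n x = x^3 - ((\<alpha> + 1) * n + \<alpha> - 4) * x^2
     + (\<alpha> * n^2 + (\<alpha>^2 - 2*\<alpha> - 1) * n - 2*\<alpha> + 1) * x
     - \<alpha>^2 * n^2 + (5*\<alpha>^2 - 3*\<alpha> + 2) * n - 10*\<alpha>^2 + 15*\<alpha> - 8"

definition eta :: "real \<Rightarrow> real \<Rightarrow> real" where
  "eta \<alpha> n = Max {x. eta_poly \<alpha> n x = 0}"

end

theory Submission
  imports Defs "HOL-Computational_Algebra.Polynomial"
begin

text \<open>The vertex partition of \<open>K\<^sub>s \<or> (K\<^sub>m \<union> t K\<^sub>1)\<close> into the three parts is equitable. If an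
  eigenvector of \<open>A\<^sub>\<alpha>\<close> has all three block sums zero, its eigenvalue is one of the diagonal
  values \<open>\<alpha>(n-1)-(1-\<alpha>)\<close>, \<open>\<alpha>(s+m-1)-(1-\<alpha>)\<close>, \<open>\<alpha>s\<close>; otherwise the block sums form an eigenvector
  of the 3\<times>3 quotient matrix, so the eigenvalue is a root of its characteristic polynomial.
  For \<open>m = n-3s+1\<close>, \<open>t = 2s-1\<close> this cubic is positive from \<open>n-3\<close> on, hence
  \<open>\<rho>\<^sub>\<alpha> < n-3\<close>. The cubic defining \<open>\<eta>(n)\<close> is negative at \<open>n-3\<close> and positive at \<open>n\<close>,
  so \<open>\<eta>(n) > n-3\<close>.\<close>

lemma arrowhead_cubic_roots_finite:
  fixes a b c A B :: real
  shows "finite {x. (x - a) * (x - b) * (x - c) - A * (x - c) - B * (x - b) = 0}"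
proof -
  let ?q = "[:-a, 1:] * [:-b, 1:] * [:-c, 1:] - smult A [:-c, 1:] - smult B [:-b, 1:]"
  have "?q \<noteq> 0" by simp
  moreover have "poly ?q x = (x - a) * (x - b) * (x - c) - A * (x - c) - B * (x - b)" for x
    by (simp add: algebra_simps)
  ultimately show ?thesis using poly_roots_finite[of ?q] by simp
qed

lemma arrowhead_cubic_pos_mono:
  fixes a b c A B L x :: real
  assumes "b < L" "c < L" "0 \<le> A" "0 \<le> B"
    and "0 < (L - a) * (L - b) * (L - c) - A * (L - c) - B * (L - b)" and "L \<le> x"
  shows "0 < (x - a) * (x - b) * (x - c) - A * (x - c) - B * (x - b)"
proof -
  \<comment> \<open>Dividing by the positive factors, the claim reads x - a > A/(x - b) + B/(x - c), whose
      left side increases and right side decreases in x.\<close>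
  have pos: "0 < L - b" "0 < L - c" "L - b \<le> x - b" "L - c \<le> x - c" using assms by auto
  have "A * (L - c) + B * (L - b) < (L - a) * ((L - b) * (L - c))"
    using assms(5) by (simp add: algebra_simps)
  then have "(A * (L - c) + B * (L - b)) / ((L - b) * (L - c)) < L - a"
    using pos by (subst pos_divide_less_eq) auto
  also have "(A * (L - c) + B * (L - b)) / ((L - b) * (L - c)) = A / (L - b) + B / (L - c)"
    using pos by (simp add: field_simps)
  finally have "A / (L - b) + B / (L - c) < L - a" .
  moreover have "A / (x - b) \<le> A / (L - b)" "B / (x - c) \<le> B / (L - c)"
    using pos assms(3,4) by (auto intro: divide_left_mono)
  ultimately have "A / (x - b) + B / (x - c) < x - a" using assms(6) by linarith
  then have "(A / (x - b) + B / (x - c)) * ((x - b) * (x - c)) < (x - a) * ((x - b) * (x - c))"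
    using pos by (intro mult_strict_right_mono) auto
  also have "(A / (x - b) + B / (x - c)) * ((x - b) * (x - c)) = A * (x - c) + B * (x - b)"
    using pos by (simp add: distrib_right)
  finally show ?thesis by (simp add: algebra_simps)
qed

text \<open>\<open>det (x I - Q)\<close> for the quotient matrix \<open>Q\<close> of \<open>A\<^sub>\<alpha>\<close> with respect to the parts
  \<open>K\<^sub>s, K\<^sub>m, t K\<^sub>1\<close> of \<open>K\<^sub>s \<or> (K\<^sub>m \<union> t K\<^sub>1)\<close>: its rows are
  \<open>(\<alpha>(n-1) + (1-\<alpha>)(s-1), (1-\<alpha>)m, (1-\<alpha>)t)\<close>, \<open>((1-\<alpha>)s, \<alpha>(s+m-1) + (1-\<alpha>)(m-1), 0)\<close>
  and \<open>((1-\<alpha>)s, 0, \<alpha>s)\<close>, where \<open>n = s + m + t\<close>.\<close>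

definition quotient_charpoly :: "real \<Rightarrow> real \<Rightarrow> real \<Rightarrow> real \<Rightarrow> real \<Rightarrow> real" where
  "quotient_charpoly \<alpha> s m t x =
     (x - (\<alpha> * (s + m + t - 1) + (1 - \<alpha>) * (s - 1)))
       * (x - (\<alpha> * (s + m - 1) + (1 - \<alpha>) * (m - 1))) * (x - \<alpha> * s)
     - (1 - \<alpha>)^2 * s * m * (x - \<alpha> * s)
     - (1 - \<alpha>)^2 * s * t * (x - (\<alpha> * (s + m - 1) + (1 - \<alpha>) * (m - 1)))"

lemma quotient_charpoly_roots_finite: "finite {x. quotient_charpoly \<alpha> s m t x = 0}"
  unfolding quotient_charpoly_def by (rule arrowhead_cubic_roots_finite)

locale clique_join =
  fixes s m t :: nat
begin

abbreviation "G \<equiv> gjoin (complete s) (gunion (complete m) (edgeless t))"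
abbreviation "p \<equiv> s + m"
abbreviation "n \<equiv> s + m + t"

lemma gorder_G: "gorder G = n"
  by (simp add: gjoin_def gunion_def gorder_def complete_def edgeless_def)

lemma neighbours:
  assumes "i < n"
  shows "{j. j < n \<and> gadj G i j} =
    (if i < s then {..<n} - {i} else if i < p then {..<p} - {i} else {..<s})"
  using assms by (auto simp: gjoin_def gunion_def gorder_def gadj_def complete_def edgeless_def)

lemma A_alpha_mult:
  fixes v :: "nat \<Rightarrow> real"
  assumes i: "i < n"
  shows "(\<Sum>j<n. A_alpha \<alpha> G i j * v j) =
     (if i < s then \<alpha> * (real n - 1) * v i + (1 - \<alpha>) * ((\<Sum>j<n. v j) - v i)
      else if i < p then \<alpha> * (real p - 1) * v i + (1 - \<alpha>) * ((\<Sum>j<p. v j) - v i)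
      else \<alpha> * real s * v i + (1 - \<alpha>) * (\<Sum>j<s. v j))"
proof -
  define N where "N = {j. j < n \<and> gadj G i j}"
  have "(\<Sum>j<n. A_alpha \<alpha> G i j * v j) =
      (\<Sum>j<n. (if j = i then \<alpha> * real (Defs.degree G i) * v j else 0)
        + (1 - \<alpha>) * (if j \<in> N then v j else 0))"
    by (rule sum.cong) (auto simp: A_alpha_def N_def algebra_simps)
  also have "\<dots> = \<alpha> * real (card N) * v i + (1 - \<alpha>) * sum v N"
    using i by (simp add: sum.distrib sum_distrib_left[symmetric] sum.If_cases Defs.degree_def
      gorder_G N_def Int_def)
  finally show ?thesis
    using i by (simp add: N_def neighbours sum_diff1 of_nat_diff)
qed

lemma sum_blocks:
  fixes v :: "nat \<Rightarrow> real"
  shows "(\<Sum>j<p. v j) = (\<Sum>j<s. v j) + (\<Sum>j\<in>{s..<p}. v j)"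
    and "(\<Sum>j<n. v j) = (\<Sum>j<s. v j) + (\<Sum>j\<in>{s..<p}. v j) + (\<Sum>j\<in>{p..<n}. v j)"
  unfolding lessThan_atLeast0 by (simp_all add: sum.atLeastLessThan_concat)

lemma block_sums_eigen:
  fixes v :: "nat \<Rightarrow> real"
  assumes ev: "\<forall>i<n. (\<Sum>j<n. A_alpha \<alpha> G i j * v j) = \<mu> * v i"
  defines "X \<equiv> \<Sum>i<s. v i" and "Y \<equiv> \<Sum>i\<in>{s..<p}. v i" and "Z \<equiv> \<Sum>i\<in>{p..<n}. v i"
  shows "(\<mu> - (\<alpha> * (real n - 1) + (1 - \<alpha>) * (real s - 1))) * X = (1 - \<alpha>) * real s * (Y + Z)"
    and "(\<mu> - (\<alpha> * (real p - 1) + (1 - \<alpha>) * (real m - 1))) * Y = (1 - \<alpha>) * real m * X"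
    and "(\<mu> - \<alpha> * real s) * Z = (1 - \<alpha>) * real t * X"
proof -
  have row: "\<mu> * v i = (if i < s then \<alpha> * (real n - 1) * v i + (1 - \<alpha>) * (X + Y + Z - v i)
      else if i < p then \<alpha> * (real p - 1) * v i + (1 - \<alpha>) * (X + Y - v i)
      else \<alpha> * real s * v i + (1 - \<alpha>) * X)" if "i < n" for i
    using ev A_alpha_mult[OF that, of \<alpha> v] that by (simp add: sum_blocks X_def Y_def Z_def)
  have "\<mu> * X = (\<Sum>i<s. \<mu> * v i)" by (simp add: X_def sum_distrib_left)
  also have "\<dots> = (\<Sum>i<s. \<alpha> * (real n - 1) * v i + (1 - \<alpha>) * (X + Y + Z) - (1 - \<alpha>) * v i)"
    by (rule sum.cong) (auto simp: row algebra_simps)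
  also have "\<dots> = \<alpha> * (real n - 1) * X + (1 - \<alpha>) * (real s * (X + Y + Z) - X)"
    by (simp add: X_def sum.distrib sum_subtractf sum_distrib_left[symmetric] algebra_simps)
  finally show "(\<mu> - (\<alpha> * (real n - 1) + (1 - \<alpha>) * (real s - 1))) * X = (1 - \<alpha>) * real s * (Y + Z)"
    by (simp add: algebra_simps)
  have "\<mu> * Y = (\<Sum>i\<in>{s..<p}. \<mu> * v i)" by (simp add: Y_def sum_distrib_left)
  also have "\<dots> = (\<Sum>i\<in>{s..<p}. \<alpha> * (real p - 1) * v i + (1 - \<alpha>) * (X + Y) - (1 - \<alpha>) * v i)"
    by (rule sum.cong) (auto simp: row algebra_simps)
  also have "\<dots> = \<alpha> * (real p - 1) * Y + (1 - \<alpha>) * (real m * (X + Y) - Y)"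
    by (simp add: Y_def sum.distrib sum_subtractf sum_distrib_left[symmetric] algebra_simps)
  finally show "(\<mu> - (\<alpha> * (real p - 1) + (1 - \<alpha>) * (real m - 1))) * Y = (1 - \<alpha>) * real m * X"
    by (simp add: algebra_simps)
  have "\<mu> * Z = (\<Sum>i\<in>{p..<n}. \<mu> * v i)" by (simp add: Z_def sum_distrib_left)
  also have "\<dots> = (\<Sum>i\<in>{p..<n}. \<alpha> * real s * v i + (1 - \<alpha>) * X)"
    by (rule sum.cong) (auto simp: row algebra_simps)
  also have "\<dots> = \<alpha> * real s * Z + (1 - \<alpha>) * real t * X"
    by (simp add: Z_def sum.distrib sum_distrib_left[symmetric])
  finally show "(\<mu> - \<alpha> * real s) * Z = (1 - \<alpha>) * real t * X"
    by (simp add: algebra_simps)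
qed

lemma eigenvalue_cases:
  assumes "is_eigenvalue n (A_alpha \<alpha> G) \<mu>"
  shows "\<mu> \<in> {\<alpha> * (real n - 1) - (1 - \<alpha>), \<alpha> * (real p - 1) - (1 - \<alpha>), \<alpha> * real s}
    \<or> quotient_charpoly \<alpha> s m t \<mu> = 0"
proof -
  obtain v where nz: "\<exists>i<n. v i \<noteq> 0" and ev: "\<forall>i<n. (\<Sum>j<n. A_alpha \<alpha> G i j * v j) = \<mu> * v i"
    using assms unfolding is_eigenvalue_def by blast
  define X Y Z where "X = (\<Sum>i<s. v i)" and "Y = (\<Sum>i\<in>{s..<p}. v i)" and "Z = (\<Sum>i\<in>{p..<n}. v i)"
  note quotient_eqs = block_sums_eigen[OF ev, folded X_def Y_def Z_def]
  show ?thesis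
  proof (cases "X = 0 \<and> Y = 0 \<and> Z = 0")
    case True
    then have "(\<Sum>j<s. v j) = 0" "(\<Sum>j<p. v j) = 0" "(\<Sum>j<n. v j) = 0"
      unfolding X_def Y_def Z_def sum_blocks by simp_all
    moreover obtain i where i: "i < n" "v i \<noteq> 0" using nz by blast
    ultimately have "\<mu> * v i = (if i < s then \<alpha> * (real n - 1) - (1 - \<alpha>)
        else if i < p then \<alpha> * (real p - 1) - (1 - \<alpha>) else \<alpha> * real s) * v i"
      using ev A_alpha_mult[OF i(1), of \<alpha> v] by (simp add: algebra_simps)
    then show ?thesis using i(2) by (auto split: if_splits)
  next
    case False
    \<comment> \<open>\<open>(X, Y, Z) \<noteq> 0\<close> is an eigenvector of the quotient matrix for \<open>\<mu>\<close>.\<close>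
    have "quotient_charpoly \<alpha> s m t \<mu> * X = 0 \<and> quotient_charpoly \<alpha> s m t \<mu> * Y = 0
        \<and> quotient_charpoly \<alpha> s m t \<mu> * Z = 0"
      using quotient_eqs unfolding quotient_charpoly_def by (simp add: power2_eq_square) algebra
    then show ?thesis using False by auto
  qed
qed

lemma alpha_s_eigenvalue:
  assumes "2 \<le> t"
  shows "is_eigenvalue n (A_alpha \<alpha> G) (\<alpha> * real s)"
proof -
  define v :: "nat \<Rightarrow> real" where "v j = (if j = p then 1 else 0) - (if j = p + 1 then 1 else 0)" for j
  have sums: "(\<Sum>j<n. v j) = 0" "(\<Sum>j<p. v j) = 0" "(\<Sum>j<s. v j) = 0"
    using assms by (simp_all add: v_def sum_subtractf)
  have "(\<Sum>j<n. A_alpha \<alpha> G i j * v j) = \<alpha> * real s * v i" if "i < n" for i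
    using A_alpha_mult[OF that, of \<alpha> v] by (simp add: sums) (auto simp: v_def)
  moreover have "v p \<noteq> 0" "p < n" using assms by (auto simp: v_def)
  ultimately show ?thesis unfolding is_eigenvalue_def by blast
qed

lemma rho_alpha_less:
  assumes t: "2 \<le> t"
    and "\<alpha> * (real n - 1) - (1 - \<alpha>) < L" "\<alpha> * (real p - 1) - (1 - \<alpha>) < L" "\<alpha> * real s < L"
    and charpoly: "\<And>x. L \<le> x \<Longrightarrow> quotient_charpoly \<alpha> s m t x \<noteq> 0"
  shows "rho_alpha \<alpha> G < L"
proof -
  define E where "E = {\<mu>. is_eigenvalue n (A_alpha \<alpha> G) \<mu>}"
  have "E \<subseteq> {\<alpha> * (real n - 1) - (1 - \<alpha>), \<alpha> * (real p - 1) - (1 - \<alpha>), \<alpha> * real s}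
      \<union> {x. quotient_charpoly \<alpha> s m t x = 0}"
    using eigenvalue_cases unfolding E_def by blast
  then have "finite E"
    by (rule finite_subset) (simp add: quotient_charpoly_roots_finite)
  moreover have "\<alpha> * real s \<in> E" using alpha_s_eigenvalue[OF t] by (simp add: E_def)
  moreover have "\<forall>\<mu>\<in>E. \<mu> < L"
    using eigenvalue_cases assms(2-4) charpoly unfolding E_def by (auto simp: not_le[symmetric])
  ultimately show ?thesis unfolding rho_alpha_def gorder_G E_def[symmetric] by (subst Max_less_iff) auto
qed

end

lemma charpoly_bound_ineq:
  fixes k :: real and s :: nat
  assumes s: "2 \<le> s" and k: "0 \<le> k" and N: "14 \<le> k + 3 * real s + 1"
  shows "2 * (2 * real s - 3) * (k + 2 * real s - 2) * (k + 3 * real s + 1)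
    < 5 * ((2 * real s - 3) * k^2 + (8 * real s^2 - 16 * real s + 3) * k
           + 8 * real s^3 - 24 * real s^2 + 12 * real s + 6)"
proof -
  \<comment> \<open>After a shift making the free variable \<open>u \<ge> 0\<close>, the difference of the two sides is a
      polynomial in \<open>u\<close> (and \<open>k \<ge> 0\<close>) with positive coefficients.\<close>
  consider "s = 2" | "s = 3" | "4 \<le> s" using s by linarith
  then show ?thesis
  proof cases
    case 1
    define u where "u = k - 7"
    have "0 \<le> u" using N 1 by (simp add: u_def)
    then have "0 < 3 * u^2 + 39 * u + 88"
      by (intro add_nonneg_pos add_nonneg_nonneg mult_nonneg_nonneg) auto
    then show ?thesis
      using 1 by (simp add: u_def power2_eq_square power3_eq_cube algebra_simps)
  next
    case 2
    define u where "u = k - 4"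
    have "0 \<le> u" using N 2 by (simp add: u_def)
    then have "0 < 9 * u^2 + 123 * u + 318"
      by (intro add_nonneg_pos add_nonneg_nonneg mult_nonneg_nonneg) auto
    then show ?thesis
      using 2 by (simp add: u_def power2_eq_square power3_eq_cube algebra_simps)
  next
    case 3
    define u where "u = real s - 4"
    have "0 \<le> u" using 3 by (simp add: u_def)
    then have "0 < 6 * k^2 * u + 15 * k^2 + 20 * k * u^2 + 114 * k * u + 145 * k
        + 16 * u^3 + 124 * u^2 + 268 * u + 130"
      using k by (intro add_nonneg_pos add_nonneg_nonneg mult_nonneg_nonneg) auto
    then show ?thesis
      by (simp add: u_def power2_eq_square power3_eq_cube algebra_simps)
  qed
qed

lemma quotient_charpoly_pos:
  fixes \<alpha> N x :: real and s :: nat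
  assumes \<alpha>: "0 \<le> \<alpha>" "\<alpha> < 1" and s: "2 \<le> s"
    and N: "3 * real s + 1 \<le> N" "14 \<le> N" "5 \<le> (1 - \<alpha>) * N" and x: "N - 3 \<le> x"
  shows "0 < quotient_charpoly \<alpha> (real s) (N - 3 * real s + 1) (2 * real s - 1) x"
proof -
  define S c k where "S = real s" and "c = 1 - \<alpha>" and "k = N - 3 * S - 1"
  define B where
    "B = (2 * S - 3) * k^2 + (8 * S^2 - 16 * S + 3) * k + 8 * S^3 - 24 * S^2 + 12 * S + 6"
  define D where "D = 4 * S * (S - 1) * k + 4 * S * (S^2 - S - 1)"
  define R where "R = 2 * (2 * S - 3) * (k + 2 * S - 2)"
  have S2: "2 \<le> S" and k0: "0 \<le> k" and Nk: "N = k + 3 * S + 1" and c0: "0 < c"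
    using s N \<alpha> by (auto simp: S_def k_def c_def)
  have "R * N < 5 * B"
    using charpoly_bound_ineq[OF s k0] N(2) by (simp add: R_def B_def Nk S_def)
  moreover have "0 \<le> R" using S2 k0 by (simp add: R_def)
  ultimately have "0 < B" using N(2) by (smt (verit) mult_nonneg_nonneg)
  then have "R * N < c * B * N"
    using \<open>R * N < 5 * B\<close> mult_right_mono[OF N(3), of B] by (simp add: c_def algebra_simps)
  then have "R < c * B" using N(2) by simp
  moreover have "0 \<le> D"
  proof -
    have "2 * S \<le> S * S" using mult_right_mono[OF S2, of S] S2 by simp
    then have "1 \<le> S^2 - S - 1" using S2 unfolding power2_eq_square by linarith
    then show ?thesis using S2 k0 by (simp add: D_def)
  qed
  moreover have "quotient_charpoly \<alpha> S (N - 3 * S + 1) (2 * S - 1) (N - 3) = c * B + c^2 * D - R"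
    unfolding quotient_charpoly_def B_def D_def R_def Nk
    by (simp add: c_def power2_eq_square power3_eq_cube algebra_simps)
  ultimately have at_order_minus_3: "0 < quotient_charpoly \<alpha> S (N - 3 * S + 1) (2 * S - 1) (N - 3)"
    using c0 by (smt (verit) mult_nonneg_nonneg zero_le_power2)
  have "\<alpha> * S \<le> S" using \<alpha> S2 by (simp add: mult_left_le_one_le)
  moreover have
    "\<alpha> * (S + (N - 3 * S + 1) - 1) + (1 - \<alpha>) * (N - 3 * S + 1 - 1) = N - 3 * S + \<alpha> * S"
    by (simp add: algebra_simps)
  ultimately have "\<alpha> * (S + (N - 3 * S + 1) - 1) + (1 - \<alpha>) * (N - 3 * S + 1 - 1) < N - 3"
    and "\<alpha> * S < N - 3"
    using S2 N(1)[folded S_def] N(2) by linarith+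
  moreover have "0 \<le> (1 - \<alpha>)^2 * S * (N - 3 * S + 1)" "0 \<le> (1 - \<alpha>)^2 * S * (2 * S - 1)"
    using S2 N(1) by (simp_all add: S_def)
  ultimately show ?thesis
    using arrowhead_cubic_pos_mono[OF _ _ _ _ at_order_minus_3[unfolded quotient_charpoly_def] x]
    unfolding quotient_charpoly_def S_def by blast
qed

lemma eta_gt_of_sign_change:
  assumes "L < b" "eta_poly \<alpha> N L < 0" "0 < eta_poly \<alpha> N b"
  shows "L < eta \<alpha> N"
proof -
  define q where "q = [:- (\<alpha>^2 * N^2) + (5 * \<alpha>^2 - 3 * \<alpha> + 2) * N - 10 * \<alpha>^2 + 15 * \<alpha> - 8,
     \<alpha> * N^2 + (\<alpha>^2 - 2 * \<alpha> - 1) * N - 2 * \<alpha> + 1, - ((\<alpha> + 1) * N + \<alpha> - 4), 1:]"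
  have q: "poly q x = eta_poly \<alpha> N x" for x
    by (simp add: q_def eta_poly_def power2_eq_square power3_eq_cube algebra_simps)
  obtain r where r: "L < r" "eta_poly \<alpha> N r = 0"
    using poly_IVT_pos[of L b q] assms by (auto simp: q)
  have "q \<noteq> 0" by (simp add: q_def)
  then have "finite {x. eta_poly \<alpha> N x = 0}"
    using poly_roots_finite[of q] by (simp add: q)
  then have "r \<le> eta \<alpha> N" unfolding eta_def using r(2) by (intro Max_ge) auto
  then show ?thesis using r(1) by simp
qed

lemma eta_poly_at_order_minus_3:
  "eta_poly \<alpha> N (N - 3) = - 2 * ((1 - \<alpha>) * (\<alpha> * (N - 5) + 1))"
  by (simp add: eta_poly_def power2_eq_square power3_eq_cube algebra_simps)

lemma eta_poly_at_order:
  "eta_poly \<alpha> N N = (1 - \<alpha>) * (3 * N^2 - 5 * (N - 1)) + 5 * (1 - \<alpha>)^2 * (N - 2) + 3 * (N - 1)"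
  by (simp add: eta_poly_def power2_eq_square power3_eq_cube algebra_simps)

lemma order_minus_3_less_eta:
  assumes "0 \<le> \<alpha>" "\<alpha> < 1" "14 \<le> N"
  shows "N - 3 < eta \<alpha> N"
proof (rule eta_gt_of_sign_change)
  have "0 \<le> \<alpha> * (N - 5)" using assms by simp
  then have "0 < (1 - \<alpha>) * (\<alpha> * (N - 5) + 1)" using assms(2) by (simp add: add_nonneg_pos)
  then show "eta_poly \<alpha> N (N - 3) < 0" by (simp add: eta_poly_at_order_minus_3)
  have "14 * N \<le> N * N" using assms(3) by (intro mult_right_mono) auto
  then have "5 * (N - 1) < 3 * N^2" using assms(3) unfolding power2_eq_square by argo
  then have "0 < (1 - \<alpha>) * (3 * N^2 - 5 * (N - 1))" using assms(2) by simp
  moreover have "0 \<le> 5 * (1 - \<alpha>)^2 * (N - 2)" using assms(3) by simp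
  ultimately show "0 < eta_poly \<alpha> N N" using assms(3) unfolding eta_poly_at_order by argo
qed simp

lemma order_bounds_of_f_bound:
  assumes "0 \<le> \<alpha>" "\<alpha> < 1" "f_bound \<alpha> \<le> N"
  shows "14 \<le> N" and "5 \<le> (1 - \<alpha>) * N"
proof -
  consider "\<alpha> \<le> 1/2" "14 \<le> N" | "1/2 < \<alpha>" "\<alpha> \<le> 2/3" "17 \<le> N"
    | "2/3 < \<alpha>" "\<alpha> \<le> 3/4" "20 \<le> N" | "3/4 < \<alpha>" "5 / (1 - \<alpha>) + 1 \<le> N"
    using assms(3) unfolding f_bound_def by (auto split: if_splits)
  then have "14 \<le> N \<and> 5 \<le> (1 - \<alpha>) * N"
  proof cases
    case 1
    then have "(1/2) * 14 \<le> (1 - \<alpha>) * N" by (intro mult_mono) auto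
    then show ?thesis using 1 by simp
  next
    case 2
    then have "(1/3) * 17 \<le> (1 - \<alpha>) * N" by (intro mult_mono) auto
    then show ?thesis using 2 by simp
  next
    case 3
    then have "(1/4) * 20 \<le> (1 - \<alpha>) * N" by (intro mult_mono) auto
    then show ?thesis using 3 by simp
  next
    case 4
    have c: "0 < 1 - \<alpha>" "1 - \<alpha> < 1/4" using 4 assms(2) by auto
    then have "20 < 5 / (1 - \<alpha>)" by (simp add: field_simps)
    moreover have "(1 - \<alpha>) * (5 / (1 - \<alpha>) + 1) \<le> (1 - \<alpha>) * N"
      using 4 c by (intro mult_left_mono) auto
    moreover have "(1 - \<alpha>) * (5 / (1 - \<alpha>) + 1) = 5 + (1 - \<alpha>)" using c by (simp add: field_simps)
    ultimately show ?thesis using 4 c by linarith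
  qed
  then show "14 \<le> N" "5 \<le> (1 - \<alpha>) * N" by auto
qed

theorem mainTheorem5:
  fixes \<alpha> :: real and n s :: nat
  assumes "0 \<le> \<alpha>" and "\<alpha> < 1"
    and "real n \<ge> f_bound \<alpha>"
    and "2 \<le> s" and "real s \<le> (real n - 1) / 3"
  shows "rho_alpha \<alpha> (gjoin (complete s) (gunion (complete (n - 3*s + 1)) (edgeless (2*s - 1))))
           < eta \<alpha> (real n)"
proof -
  have N: "14 \<le> real n" "5 \<le> (1 - \<alpha>) * real n" using order_bounds_of_f_bound[OF assms(1-3)] by auto
  have s: "3 * real s + 1 \<le> real n" using assms(5) by simp
  define m t where "m = n - 3 * s + 1" and "t = 2 * s - 1"
  have order: "s + m + t = n" and m: "real m = real n - 3 * real s + 1"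
    and t: "real t = 2 * real s - 1" "2 \<le> t"
    using s assms(4) by (simp_all add: m_def t_def of_nat_diff)
  have "rho_alpha \<alpha> (gjoin (complete s) (gunion (complete m) (edgeless t))) < real n - 3"
  proof (rule clique_join.rho_alpha_less[where s = s and m = m and t = t, unfolded order])
    have "\<alpha> * real s \<le> real s" "\<alpha> * real m \<le> real m"
      using assms(1,2) by (simp_all add: mult_left_le_one_le)
    moreover have "\<alpha> * (real (s + m) - 1) - (1 - \<alpha>) = \<alpha> * real s + \<alpha> * real m - 1"
      by (simp add: algebra_simps)
    ultimately show "\<alpha> * (real (s + m) - 1) - (1 - \<alpha>) < real n - 3" "\<alpha> * real s < real n - 3"
      using s N(1) m assms(4) by linarith+
    show "\<alpha> * (real n - 1) - (1 - \<alpha>) < real n - 3" using N(2) by (simp add: algebra_simps)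
    show "quotient_charpoly \<alpha> s m t x \<noteq> 0" if "real n - 3 \<le> x" for x
      using quotient_charpoly_pos[OF assms(1,2,4) s N that] by (simp add: m t)
  qed (use t in simp)
  also have "\<dots> < eta \<alpha> (real n)" using assms(1,2) N(1) by (rule order_minus_3_less_eta)
  finally show ?thesis unfolding m_def t_def .
qed
end
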